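(* An abstract $b$-flip $f$ is non ambiguous if and only if (a) it is a sliding flip, and (b) for every oriented $(S,V)$ and every application of $f$ to a branched ideal triangulation $(T,b)$ of $(S,V)$ producing $(T',b')$, one has $S_\pm(T,b)=S_\pm(T',b')$. In that case the boundary $1$-cycles $\partial S_\pm$ are also preserved.
   Context: $(S,V)$: a closed surface with finite set of marked points, $\chi(S)-|V|<0$. A branching $b$ of an ideal triangulation (vertex set $V$) orients edges so that on each abstract triangle the orientations are induced by a total order $v_0<v_1<v_2$ of its vertices, edges pointing to the larger endpoint. An abstract $b$-flip acts on a quadrilateral $Q=t_1\cup t_2$ with diagonal $e$. It replaces $e$ by the other diagonal $e'$, oriented so that the result is branched with boundary edges of $Q$ unchanged. It is forced if it is the unique branched enhancement of the naked flip starting from $(t_1\cup t_2,b)$. It is non ambiguous if both it and its inverse $b$-flip are forced. It is a sliding flip if at least one of it and its inverse is forced. When $S$ is oriented, for a branched triangle $t$ set $*_{(t,b)}=+1$ if the orientation of $t$ given by $(v_0,v_1,v_2)$ agrees with that of $S$ and $-1$ otherwise. $S_\pm(T,b)$ is the union of the triangles with $*_{(t,b)}=\pm1$, so $S=S_+\cup S_-$, and $\partial S_\pm$ is the boundary $1$-cycle of the simplicial $2$-chain supported by $S_\pm$. *)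

theory Defs
  imports "HOL-Analysis.Analysis"
begin

text \<open>The abstract quadrilateral Q has four
distinct corners 0,1,2,3, realised in the plane as the corners of the unit square,
in counterclockwise cyclic order.  A branching is encoded
as a set D of directed edges (a,b), meaning the edge {a,b} points from a to b.\<close>

definition corner :: "nat \<Rightarrow> real \<times> real" where
  "corner i = (if i = 0 then (0,0) else if i = 1 then (1,0) else if i = 2 then (1,1) else (0,1))"

definition qdet :: "nat \<Rightarrow> nat \<Rightarrow> nat \<Rightarrow> real" where
  "qdet a b c = (fst (corner b) - fst (corner a)) * (snd (corner c) - snd (corner a))
              - (snd (corner b) - snd (corner a)) * (fst (corner c) - fst (corner a))"

definition bdry_edges :: "nat set set" where
  "bdry_edges = {{0,1},{1,2},{2,3},{3,0}}"

definition diag :: "bool \<Rightarrow> nat set" where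
  "diag d = (if d then {1,3} else {0,2})"

definition quad_tris :: "bool \<Rightarrow> nat set set" where
  "quad_tris d = (if d then {{0,1,3},{1,2,3}} else {{0,1,2},{0,2,3}})"

definition directed :: "nat set set \<Rightarrow> (nat \<times> nat) set" where
  "directed E = {(a,b). a \<noteq> b \<and> {a,b} \<in> E}"

definition orients :: "nat set set \<Rightarrow> (nat \<times> nat) set \<Rightarrow> bool" where
  "orients E D \<longleftrightarrow> D \<subseteq> directed E \<and>
     (\<forall>a b. (a,b) \<in> directed E \<longrightarrow> ((a,b) \<in> D \<longleftrightarrow> (b,a) \<notin> D))"

definition branched_tri :: "(nat \<times> nat) set \<Rightarrow> nat set \<Rightarrow> bool" where
  "branched_tri D t \<longleftrightarrow> (\<exists>v0 v1 v2. t = {v0,v1,v2} \<and> distinct [v0,v1,v2] \<and>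
      (v0,v1) \<in> D \<and> (v1,v2) \<in> D \<and> (v0,v2) \<in> D)"

definition branched_quad :: "bool \<Rightarrow> (nat \<times> nat) set \<Rightarrow> bool" where
  "branched_quad d D \<longleftrightarrow> orients (bdry_edges \<union> {diag d}) D \<and> (\<forall>t \<in> quad_tris d. branched_tri D t)"

definition b_flip :: "bool \<Rightarrow> (nat \<times> nat) set \<Rightarrow> (nat \<times> nat) set \<Rightarrow> bool" where
  "b_flip d D D' \<longleftrightarrow> branched_quad d D \<and> branched_quad (\<not> d) D' \<and>
     D \<inter> directed bdry_edges = D' \<inter> directed bdry_edges"

definition forced :: "bool \<Rightarrow> (nat \<times> nat) set \<Rightarrow> (nat \<times> nat) set \<Rightarrow> bool" where
  "forced d D D' \<longleftrightarrow> b_flip d D D' \<and> (\<forall>D''. b_flip d D D'' \<longrightarrow> D'' = D')"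

text \<open>The inverse of the flip (d,D,D') is the flip (\<not>d,D',D).\<close>
definition non_ambiguous :: "bool \<Rightarrow> (nat \<times> nat) set \<Rightarrow> (nat \<times> nat) set \<Rightarrow> bool" where
  "non_ambiguous d D D' \<longleftrightarrow> forced d D D' \<and> forced (\<not> d) D' D"

definition sliding :: "bool \<Rightarrow> (nat \<times> nat) set \<Rightarrow> (nat \<times> nat) set \<Rightarrow> bool" where
  "sliding d D D' \<longleftrightarrow> forced d D D' \<or> forced (\<not> d) D' D"

text \<open>Orientation of the ambient surface restricted to Q: eps = 1 if it agrees with the
counterclockwise orientation of the square, eps = -1 otherwise.  The sign *_(t,b) is
eps * sign(det(v0,v1,v2)); sgn_tri eps D t s says that it equals s.\<close>
definition sgn_tri :: "real \<Rightarrow> (nat \<times> nat) set \<Rightarrow> nat set \<Rightarrow> real \<Rightarrow> bool" where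
  "sgn_tri eps D t s \<longleftrightarrow> (\<exists>v0 v1 v2. t = {v0,v1,v2} \<and> distinct [v0,v1,v2] \<and>
      (v0,v1) \<in> D \<and> (v1,v2) \<in> D \<and> (v0,v2) \<in> D \<and> sgn (eps * qdet v0 v1 v2) = s)"

text \<open>S_s(T,b) \<inter> Q, as a point set in the plane (s = 1 or s = -1).\<close>
definition S_region :: "real \<Rightarrow> real \<Rightarrow> bool \<Rightarrow> (nat \<times> nat) set \<Rightarrow> (real \<times> real) set" where
  "S_region s eps d D = \<Union> {convex hull (corner ` t) | t. t \<in> quad_tris d \<and> sgn_tri eps D t s}"

text \<open>Coefficient of the directed edge (a,b) in the boundary of the triangle t,
t carrying the orientation of the surface.\<close>
definition tri_bdry :: "real \<Rightarrow> nat set \<Rightarrow> nat \<times> nat \<Rightarrow> real" where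
  "tri_bdry eps t e = (case e of (a,b) \<Rightarrow>
     if a \<in> t \<and> b \<in> t \<and> a \<noteq> b then (\<Sum>c \<in> t - {a,b}. eps * sgn (qdet a b c)) else 0)"

text \<open>The part inside Q of the boundary 1-cycle of the simplicial 2-chain supported by S_s.\<close>
definition S_bdry :: "real \<Rightarrow> real \<Rightarrow> bool \<Rightarrow> (nat \<times> nat) set \<Rightarrow> nat \<times> nat \<Rightarrow> real" where
  "S_bdry s eps d D e = (\<Sum>t \<in> {t \<in> quad_tris d. sgn_tri eps D t s}. tri_bdry eps t e)"

end

theory Submission
  imports Defs
begin

text \<open>A branching of Q is determined by the orientations of its four boundary edges and of its
diagonal.  A triangle is branched iff its three edges are not oriented cyclically, and since
qdet is alternating, the sign of a branched triangle is the parity of its edge orientations.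
The two triangulations of the square have no common triangle, and the only unions of their
triangles that agree are the empty set and Q itself; hence S_+ and S_- are preserved exactly
when all four triangles carry the same sign, and then so are their boundary cycles, both
triangulations having the same boundary. Flips starting from the diagonal {1,3} are inverses
of flips starting from {0,2}, and for those the remaining equivalence is a finite check over
the orientations of the four boundary edges and the two diagonals.\<close>

lemma orients_converse:
  assumes "orients E D" "{a,b} \<in> E" "a \<noteq> b"
  shows "(b,a) \<in> D \<longleftrightarrow> (a,b) \<notin> D"
  using assms unfolding orients_def directed_def by blast

lemma orients_subset_eq:
  assumes D: "orients E D" and D': "orients E D'" and sub: "D \<subseteq> D'"
  shows "D = D'"
proof
  show "D' \<subseteq> D"
  proof
    fix e assume "e \<in> D'"
    obtain a b where e: "e = (a,b)" by fastforce
    have ab: "(a,b) \<in> directed E" using \<open>e \<in> D'\<close> D' e unfolding orients_def by blast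
    then have "(b,a) \<notin> D'" using \<open>e \<in> D'\<close> D' e unfolding orients_def by blast
    with sub have "(b,a) \<notin> D" by blast
    with ab D e show "e \<in> D" unfolding orients_def by blast
  qed
qed (rule sub)

lemma ex_ordering_iff:
  assumes "distinct [a,b,c]"
  shows "(\<exists>v0 v1 v2. {a,b,c} = {v0,v1,v2} \<and> distinct [v0,v1,v2] \<and> P v0 v1 v2) \<longleftrightarrow>
    P a b c \<or> P a c b \<or> P b a c \<or> P b c a \<or> P c a b \<or> P c b a"
proof
  assume "\<exists>v0 v1 v2. {a,b,c} = {v0,v1,v2} \<and> distinct [v0,v1,v2] \<and> P v0 v1 v2"
  then obtain v0 v1 v2 where v: "{a,b,c} = {v0,v1,v2}" "distinct [v0,v1,v2]" "P v0 v1 v2"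
    by blast
  from v(1) have "v0 \<in> {a,b,c}" "v1 \<in> {a,b,c}" "v2 \<in> {a,b,c}" by auto
  with v(2,3) show "P a b c \<or> P a c b \<or> P b a c \<or> P b c a \<or> P c a b \<or> P c b a"
    by auto
next
  assume "P a b c \<or> P a c b \<or> P b a c \<or> P b c a \<or> P c a b \<or> P c b a"
  with assms show "\<exists>v0 v1 v2. {a,b,c} = {v0,v1,v2} \<and> distinct [v0,v1,v2] \<and> P v0 v1 v2"
    by (elim disjE; (intro exI conjI; assumption?)) auto
qed

lemma branched_tri_iff:
  assumes D: "orients E D" and E: "{u,v} \<in> E" "{v,w} \<in> E" "{u,w} \<in> E"
    and uvw: "distinct [u,v,w]"
  shows "branched_tri D {u,v,w} \<longleftrightarrow>
    ((u,v) \<in> D \<longleftrightarrow> (v,w) \<in> D) \<longrightarrow> ((u,w) \<in> D \<longleftrightarrow> (u,v) \<in> D)"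
proof -
  have "(v,u) \<in> D \<longleftrightarrow> (u,v) \<notin> D" "(w,v) \<in> D \<longleftrightarrow> (v,w) \<notin> D" "(w,u) \<in> D \<longleftrightarrow> (u,w) \<notin> D"
    using orients_converse[OF D] E uvw by auto
  then show ?thesis
    unfolding branched_tri_def ex_ordering_iff[OF uvw] by auto
qed

lemma qdet_rotate: "qdet b c a = qdet a b c"
  unfolding qdet_def by (simp add: algebra_simps)

lemma qdet_swap: "qdet a c b = - qdet a b c"
  unfolding qdet_def by (simp add: algebra_simps)

lemma sgn_tri_iff:
  assumes D: "orients E D" and E: "{u,v} \<in> E" "{v,w} \<in> E" "{u,w} \<in> E"
    and uvw: "distinct [u,v,w]" and ccw: "qdet u v w > 0" and eps: "eps \<in> {1, -1}"
  shows "sgn_tri eps D {u,v,w} s \<longleftrightarrow> branched_tri D {u,v,w} \<and>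
    (if (u,v) \<in> D \<longleftrightarrow> ((v,w) \<in> D \<longleftrightarrow> (u,w) \<in> D) then eps else - eps) = s"
proof -
  have "(v,u) \<in> D \<longleftrightarrow> (u,v) \<notin> D" "(w,v) \<in> D \<longleftrightarrow> (v,w) \<notin> D" "(w,u) \<in> D \<longleftrightarrow> (u,w) \<notin> D"
    using orients_converse[OF D] E uvw by auto
  moreover have "sgn (eps * qdet u v w) = eps" "sgn (eps * qdet v w u) = eps"
    "sgn (eps * qdet w u v) = eps" "sgn (eps * qdet u w v) = - eps"
    "sgn (eps * qdet v u w) = - eps" "sgn (eps * qdet w v u) = - eps"
    using ccw eps qdet_rotate[of u v w] qdet_rotate[of v w u] qdet_swap[of u v w]
      qdet_swap[of v w u] qdet_swap[of w u v]
    by (auto simp: sgn_mult)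
  moreover have "eps \<noteq> - eps" using eps by auto
  ultimately show ?thesis
    unfolding sgn_tri_def branched_tri_def ex_ordering_iff[OF uvw] by auto
qed

definition oriented_edge :: "bool \<Rightarrow> nat \<Rightarrow> nat \<Rightarrow> nat \<times> nat" where
  "oriented_edge p a b = (if p then (a,b) else (b,a))"

lemma oriented_edge_mem:
  assumes "orients E D" "{a,b} \<in> E" "a \<noteq> b"
  shows "oriented_edge ((a,b) \<in> D) a b \<in> D"
  using assms unfolding orients_def directed_def oriented_edge_def by auto

text \<open>Bit encoding of orientations: p_i says that the boundary edge {i, i+1 mod 4} points from i
to i+1, and x that the diagonal {0,2} (d = False) or {1,3} (d = True) points away from its
smaller endpoint.\<close>

definition bdry_orientation :: "bool \<Rightarrow> bool \<Rightarrow> bool \<Rightarrow> bool \<Rightarrow> (nat \<times> nat) set" where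
  "bdry_orientation p0 p1 p2 p3 =
     {oriented_edge p0 0 1, oriented_edge p1 1 2, oriented_edge p2 2 3, oriented_edge p3 3 0}"

definition quad_orientation :: "bool \<Rightarrow> bool \<Rightarrow> bool \<Rightarrow> bool \<Rightarrow> bool \<Rightarrow> bool \<Rightarrow> (nat \<times> nat) set" where
  "quad_orientation d p0 p1 p2 p3 x =
     insert (if d then oriented_edge x 1 3 else oriented_edge x 0 2) (bdry_orientation p0 p1 p2 p3)"

lemma mem_quad_orientation:
  "(0,1) \<in> quad_orientation d p0 p1 p2 p3 x \<longleftrightarrow> p0"
  "(1,0) \<in> quad_orientation d p0 p1 p2 p3 x \<longleftrightarrow> \<not> p0"
  "(1,2) \<in> quad_orientation d p0 p1 p2 p3 x \<longleftrightarrow> p1"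
  "(2,1) \<in> quad_orientation d p0 p1 p2 p3 x \<longleftrightarrow> \<not> p1"
  "(2,3) \<in> quad_orientation d p0 p1 p2 p3 x \<longleftrightarrow> p2"
  "(3,2) \<in> quad_orientation d p0 p1 p2 p3 x \<longleftrightarrow> \<not> p2"
  "(3,0) \<in> quad_orientation d p0 p1 p2 p3 x \<longleftrightarrow> p3"
  "(0,3) \<in> quad_orientation d p0 p1 p2 p3 x \<longleftrightarrow> \<not> p3"
  "(0,2) \<in> quad_orientation False p0 p1 p2 p3 x \<longleftrightarrow> x"
  "(2,0) \<in> quad_orientation False p0 p1 p2 p3 x \<longleftrightarrow> \<not> x"
  "(1,3) \<in> quad_orientation True p0 p1 p2 p3 x \<longleftrightarrow> x"
  "(3,1) \<in> quad_orientation True p0 p1 p2 p3 x \<longleftrightarrow> \<not> x"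
  by (simp_all add: quad_orientation_def bdry_orientation_def oriented_edge_def)

lemma quad_orientation_eq_iff:
  "quad_orientation d p0 p1 p2 p3 x = quad_orientation d q0 q1 q2 q3 y \<longleftrightarrow>
     p0 = q0 \<and> p1 = q1 \<and> p2 = q2 \<and> p3 = q3 \<and> x = y"
proof
  assume "quad_orientation d p0 p1 p2 p3 x = quad_orientation d q0 q1 q2 q3 y"
  then have "(a,b) \<in> quad_orientation d p0 p1 p2 p3 x \<longleftrightarrow> (a,b) \<in> quad_orientation d q0 q1 q2 q3 y"
    for a b by (simp only:)
  from this[of 0 1] this[of 1 2] this[of 2 3] this[of 3 0] this[of 0 2] this[of 1 3]
  show "p0 = q0 \<and> p1 = q1 \<and> p2 = q2 \<and> p3 = q3 \<and> x = y"
    by (cases d) (simp_all only: mem_quad_orientation simp_thms)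
qed simp

lemma directed_bdry_edges:
  "directed bdry_edges = {(0,1),(1,0),(1,2),(2,1),(2,3),(3,2),(3,0),(0,3)}"
  unfolding directed_def bdry_edges_def by (auto simp: doubleton_eq_iff)

lemma directed_quad_edges:
  "directed (bdry_edges \<union> {diag d}) =
     directed bdry_edges \<union> (if d then {(1,3),(3,1)} else {(0,2),(2,0)})"
  unfolding directed_def diag_def by (auto simp: doubleton_eq_iff)

lemma quad_orientation_inter_bdry:
  "quad_orientation d p0 p1 p2 p3 x \<inter> directed bdry_edges = bdry_orientation p0 p1 p2 p3"
  unfolding quad_orientation_def bdry_orientation_def directed_bdry_edges oriented_edge_def
  by auto

lemma bdry_orientation_eq_iff:
  "bdry_orientation p0 p1 p2 p3 = bdry_orientation q0 q1 q2 q3 \<longleftrightarrow>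
     p0 = q0 \<and> p1 = q1 \<and> p2 = q2 \<and> p3 = q3"
proof
  assume "bdry_orientation p0 p1 p2 p3 = bdry_orientation q0 q1 q2 q3"
  then have "quad_orientation False p0 p1 p2 p3 False = quad_orientation False q0 q1 q2 q3 False"
    unfolding quad_orientation_def by (simp only:)
  then show "p0 = q0 \<and> p1 = q1 \<and> p2 = q2 \<and> p3 = q3"
    by (simp only: quad_orientation_eq_iff simp_thms)
qed simp

lemma quad_orientation_subset_directed:
  "quad_orientation d p0 p1 p2 p3 x \<subseteq> directed (bdry_edges \<union> {diag d})"
  unfolding quad_orientation_def bdry_orientation_def oriented_edge_def directed_quad_edges
    directed_bdry_edges
  by simp

lemma orients_quad_orientation:
  "orients (bdry_edges \<union> {diag d}) (quad_orientation d p0 p1 p2 p3 x)"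
  unfolding orients_def
proof (intro conjI allI impI)
  fix a b assume "(a,b) \<in> directed (bdry_edges \<union> {diag d})"
  then consider "(a,b) \<in> directed bdry_edges" | "d" "(a,b) \<in> {(1,3),(3,1)}"
    | "\<not> d" "(a,b) \<in> {(0,2),(2,0)}"
    unfolding directed_quad_edges by (auto split: if_splits)
  then show "(a,b) \<in> quad_orientation d p0 p1 p2 p3 x \<longleftrightarrow>
      (b,a) \<notin> quad_orientation d p0 p1 p2 p3 x"
    \<comment> \<open>without One_nat_def, simp keeps the vertex 1 as a numeral, so mem_quad_orientation matches\<close>
    by cases (auto simp: directed_bdry_edges mem_quad_orientation simp del: One_nat_def)
qed (rule quad_orientation_subset_directed)

lemma orients_quad_iff:
  "orients (bdry_edges \<union> {diag d}) D \<longleftrightarrow> (\<exists>p0 p1 p2 p3 x. D = quad_orientation d p0 p1 p2 p3 x)"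
proof
  assume D: "orients (bdry_edges \<union> {diag d}) D"
  define Q where "Q = quad_orientation d ((0,1) \<in> D) ((1,2) \<in> D) ((2,3) \<in> D) ((3,0) \<in> D)
    (if d then (1,3) \<in> D else (0,2) \<in> D)"
  have mem: "oriented_edge ((a,b) \<in> D) a b \<in> D" if "{a,b} \<in> bdry_edges \<union> {diag d}" "a \<noteq> b"
    for a b using oriented_edge_mem[OF D that] .
  have sub: "Q \<subseteq> D"
    unfolding Q_def quad_orientation_def bdry_orientation_def
    using mem[of 0 1] mem[of 1 2] mem[of 2 3] mem[of 3 0] mem[of 1 3] mem[of 0 2]
    by (cases d) (simp_all add: bdry_edges_def diag_def)
  have "orients (bdry_edges \<union> {diag d}) Q"
    unfolding Q_def by (rule orients_quad_orientation)
  from orients_subset_eq[OF this D sub] have "Q = D" .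
  then show "\<exists>p0 p1 p2 p3 x. D = quad_orientation d p0 p1 p2 p3 x" unfolding Q_def by metis
qed (elim exE, simp only: orients_quad_orientation)

lemma qdet_corners: "qdet 0 1 2 = 1" "qdet 0 2 3 = 1" "qdet 0 1 3 = 1" "qdet 1 2 3 = 1"
  by (simp_all add: qdet_def corner_def)

lemma branched_tri_quad_orientation:
  "branched_tri (quad_orientation False p0 p1 p2 p3 x) {0,1,2} \<longleftrightarrow> (p0 = p1 \<longrightarrow> x = p0)"
  "branched_tri (quad_orientation False p0 p1 p2 p3 x) {0,2,3} \<longleftrightarrow> (x = p2 \<longrightarrow> (\<not> p3) = x)"
  "branched_tri (quad_orientation True p0 p1 p2 p3 y) {0,1,3} \<longleftrightarrow> (p0 = y \<longrightarrow> (\<not> p3) = p0)"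
  "branched_tri (quad_orientation True p0 p1 p2 p3 y) {1,2,3} \<longleftrightarrow> (p1 = p2 \<longrightarrow> y = p1)"
  by (subst branched_tri_iff[OF orients_quad_orientation];
      simp add: bdry_edges_def diag_def doubleton_eq_iff mem_quad_orientation del: One_nat_def)+

lemma branched_quad_quad_orientation:
  "branched_quad False (quad_orientation False p0 p1 p2 p3 x) \<longleftrightarrow>
     (p0 = p1 \<longrightarrow> x = p0) \<and> (x = p2 \<longrightarrow> (\<not> p3) = x)"
  "branched_quad True (quad_orientation True p0 p1 p2 p3 y) \<longleftrightarrow>
     (p0 = y \<longrightarrow> (\<not> p3) = p0) \<and> (p1 = p2 \<longrightarrow> y = p1)"
  unfolding branched_quad_def quad_tris_def
  by (simp_all only: orients_quad_orientation branched_tri_quad_orientation if_True if_False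
      ball_simps simp_thms)

lemma sgn_tri_diag02:
  assumes "eps \<in> {1, -1}" and "branched_quad False (quad_orientation False p0 p1 p2 p3 x)"
  shows "sgn_tri eps (quad_orientation False p0 p1 p2 p3 x) {0,1,2} s \<longleftrightarrow>
      (if p0 = (p1 = x) then eps else - eps) = s"
    "sgn_tri eps (quad_orientation False p0 p1 p2 p3 x) {0,2,3} s \<longleftrightarrow>
      (if x = (p2 = (\<not> p3)) then eps else - eps) = s"
  using assms
  by (subst sgn_tri_iff[OF orients_quad_orientation]; simp add: bdry_edges_def diag_def
      doubleton_eq_iff qdet_corners mem_quad_orientation branched_quad_def quad_tris_def
      del: One_nat_def)+

lemma sgn_tri_diag13:
  assumes "eps \<in> {1, -1}" and "branched_quad True (quad_orientation True p0 p1 p2 p3 y)"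
  shows "sgn_tri eps (quad_orientation True p0 p1 p2 p3 y) {0,1,3} s \<longleftrightarrow>
      (if p0 = (y = (\<not> p3)) then eps else - eps) = s"
    "sgn_tri eps (quad_orientation True p0 p1 p2 p3 y) {1,2,3} s \<longleftrightarrow>
      (if p1 = (p2 = y) then eps else - eps) = s"
  using assms
  by (subst sgn_tri_iff[OF orients_quad_orientation]; simp add: bdry_edges_def diag_def
      doubleton_eq_iff qdet_corners mem_quad_orientation branched_quad_def quad_tris_def
      del: One_nat_def)+

lemma convex_hull_corners:
  "convex hull (corner ` {0,1,2}) = {(x,y). 0 \<le> y \<and> y \<le> x \<and> x \<le> 1}"
  "convex hull (corner ` {0,2,3}) = {(x,y). 0 \<le> x \<and> x \<le> y \<and> y \<le> 1}"
  "convex hull (corner ` {0,1,3}) = {(x,y). 0 \<le> x \<and> 0 \<le> y \<and> x + y \<le> 1}"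
  "convex hull (corner ` {1,2,3}) = {(x,y). x \<le> 1 \<and> y \<le> 1 \<and> 1 \<le> x + y}"
proof -
  have "corner ` {0,1,2} = {(0,0),(1,0),(1,1)}" "corner ` {0,2,3} = {(0,0),(1,1),(0,1)}"
    "corner ` {0,1,3} = {(0,0),(1,0),(0,1)}" "corner ` {1,2,3} = {(1,0),(1,1),(0,1)}"
    by (auto simp: corner_def)
  moreover have "convex hull {(0,0),(1,0),(1,1)} = {(x,y). 0 \<le> y \<and> y \<le> x \<and> x \<le> (1::real)}"
    unfolding convex_hull_3
    apply auto
    subgoal for a b by (rule exI[of _ "1-a"], rule exI[of _ "a-b"]) auto
    done
  moreover have "convex hull {(0,0),(1,1),(0,1)} = {(x,y). 0 \<le> x \<and> x \<le> y \<and> y \<le> (1::real)}"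
    unfolding convex_hull_3
    apply auto
    subgoal for a b by (rule exI[of _ "1-b"], rule exI[of _ "b-a"]) auto
    done
  moreover have "convex hull {(0,0),(1,0),(0,1)} = {(x,y). 0 \<le> x \<and> 0 \<le> y \<and> x + y \<le> (1::real)}"
    unfolding convex_hull_3
    apply auto
    subgoal for a b by (rule exI[of _ "1-a-b"]) auto
    done
  moreover have "convex hull {(1,0),(1,1),(0,1)} = {(x,y). x \<le> 1 \<and> y \<le> 1 \<and> (1::real) \<le> x + y}"
    unfolding convex_hull_3
    apply auto
    subgoal for a b
      by (rule exI[of _ "1-b"], rule exI[of _ "a+b-1"], rule conjI, simp, rule exI[of _ "1-a"]) auto
    done
  ultimately show
    "convex hull (corner ` {0,1,2}) = {(x,y). 0 \<le> y \<and> y \<le> x \<and> x \<le> 1}"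
    "convex hull (corner ` {0,2,3}) = {(x,y). 0 \<le> x \<and> x \<le> y \<and> y \<le> 1}"
    "convex hull (corner ` {0,1,3}) = {(x,y). 0 \<le> x \<and> 0 \<le> y \<and> x + y \<le> 1}"
    "convex hull (corner ` {1,2,3}) = {(x,y). x \<le> 1 \<and> y \<le> 1 \<and> 1 \<le> x + y}"
    by simp_all
qed

lemma triangulations_same_union:
  "convex hull (corner ` {0,1,2}) \<union> convex hull (corner ` {0,2,3}) =
   convex hull (corner ` {0,1,3}) \<union> convex hull (corner ` {1,2,3})"
  unfolding convex_hull_corners by auto

lemma triangulation_unions_eq_iff:
  "(if a1 then convex hull (corner ` {0,1,2}) else {}) \<union> (if a2 then convex hull (corner ` {0,2,3}) else {}) =
   (if b1 then convex hull (corner ` {0,1,3}) else {}) \<union> (if b2 then convex hull (corner ` {1,2,3}) else {})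
   \<longleftrightarrow> a1 = a2 \<and> a2 = b1 \<and> b1 = b2"
  (is "?L = ?R \<longleftrightarrow> _")
proof
  assume eq: "?L = ?R"
  \<comment> \<open>each witness lies in exactly one triangle of each triangulation\<close>
  have "(1/2, 1/10) \<in> ?L \<longleftrightarrow> (1/2, 1/10) \<in> ?R" "(9/10, 1/2) \<in> ?L \<longleftrightarrow> (9/10, 1/2) \<in> ?R"
    "(1/10, 1/2) \<in> ?L \<longleftrightarrow> (1/10, 1/2) \<in> ?R" "(1/2, 9/10) \<in> ?L \<longleftrightarrow> (1/2, 9/10) \<in> ?R"
    unfolding eq by simp_all
  then have "a1 = b1" "a1 = b2" "a2 = b1" "a2 = b2"
    unfolding convex_hull_corners by (simp_all split: if_splits)
  then show "a1 = a2 \<and> a2 = b1 \<and> b1 = b2" by blast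
next
  assume "a1 = a2 \<and> a2 = b1 \<and> b1 = b2"
  then have "a2 = a1" "b1 = a1" "b2 = a1" by simp_all
  then show "?L = ?R"
    using triangulations_same_union by (cases a1) (simp_all only: if_True if_False Un_absorb)
qed

lemma Union_filter_pair:
  "\<Union> {f t | t. t \<in> {A, B} \<and> P t} = (if P A then f A else {}) \<union> (if P B then f B else {})"
  by auto

lemma sum_filter_pair:
  assumes "A \<noteq> B"
  shows "(\<Sum>t \<in> {t \<in> {A, B}. P t}. g t) = (if P A then g A else 0) + (if P B then g B else 0)"
proof -
  have "{t \<in> {A, B}. P t} = (if P A then {A} else {}) \<union> (if P B then {B} else {})" by auto
  then show ?thesis using assms by (simp add: add.commute)
qed

lemma S_region_quad_tris:
  "S_region s eps False D =
     (if sgn_tri eps D {0,1,2} s then convex hull (corner ` {0,1,2}) else {}) \<union>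
     (if sgn_tri eps D {0,2,3} s then convex hull (corner ` {0,2,3}) else {})"
  "S_region s eps True D =
     (if sgn_tri eps D {0,1,3} s then convex hull (corner ` {0,1,3}) else {}) \<union>
     (if sgn_tri eps D {1,2,3} s then convex hull (corner ` {1,2,3}) else {})"
  by (simp_all only: S_region_def quad_tris_def if_False if_True Union_filter_pair)

lemma quad_tris_distinct: "{0,1,2::nat} \<noteq> {0,2,3}" "{0,1,3::nat} \<noteq> {1,2,3}"
proof -
  have "(1::nat) \<in> {0,1,2}" "(1::nat) \<notin> {0,2,3}" "(0::nat) \<in> {0,1,3}" "(0::nat) \<notin> {1,2,3}"
    by simp_all
  then show "{0,1,2::nat} \<noteq> {0,2,3}" "{0,1,3::nat} \<noteq> {1,2,3}" by blast+
qed

lemma S_bdry_quad_tris: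
  "S_bdry s eps False D e =
     (if sgn_tri eps D {0,1,2} s then tri_bdry eps {0,1,2} e else 0) +
     (if sgn_tri eps D {0,2,3} s then tri_bdry eps {0,2,3} e else 0)"
  "S_bdry s eps True D e =
     (if sgn_tri eps D {0,1,3} s then tri_bdry eps {0,1,3} e else 0) +
     (if sgn_tri eps D {1,2,3} s then tri_bdry eps {1,2,3} e else 0)"
  using quad_tris_distinct
  by (simp_all only: S_bdry_def quad_tris_def if_False if_True sum_filter_pair simp_thms)

lemma tri_bdry_triangulations_eq:
  "tri_bdry eps {0,1,2} e + tri_bdry eps {0,2,3} e = tri_bdry eps {0,1,3} e + tri_bdry eps {1,2,3} e"
proof -
  obtain a b where e: "e = (a,b)" by fastforce
  consider "a \<in> {0,1,2,3}" "b \<in> {0,1,2,3}" | "a \<notin> {0,1,2,3}" | "b \<notin> {0,1,2,3}" by blast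
  then show ?thesis
  proof cases
    case 1
    then show ?thesis unfolding e
      by (elim insertE emptyE; simp add: tri_bdry_def qdet_def corner_def insert_Diff_if)
  qed (auto simp: e tri_bdry_def)
qed

lemma S_region_flip_eq_iff:
  "S_region s eps False D = S_region s eps True D' \<longleftrightarrow>
     sgn_tri eps D {0,1,2} s = sgn_tri eps D {0,2,3} s \<and>
     sgn_tri eps D {0,2,3} s = sgn_tri eps D' {0,1,3} s \<and>
     sgn_tri eps D' {0,1,3} s = sgn_tri eps D' {1,2,3} s"
  unfolding S_region_quad_tris by (rule triangulation_unions_eq_iff)

lemma S_bdry_flip_eq:
  assumes "S_region s eps False D = S_region s eps True D'"
  shows "S_bdry s eps False D = S_bdry s eps True D'"
proof
  fix e
  have "sgn_tri eps D {0,2,3} s = sgn_tri eps D {0,1,2} s"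
    "sgn_tri eps D' {0,1,3} s = sgn_tri eps D {0,1,2} s"
    "sgn_tri eps D' {1,2,3} s = sgn_tri eps D {0,1,2} s"
    using assms unfolding S_region_flip_eq_iff by simp_all
  then show "S_bdry s eps False D e = S_bdry s eps True D' e"
    unfolding S_bdry_quad_tris using tri_bdry_triangulations_eq[of eps e]
    by (cases "sgn_tri eps D {0,1,2} s") (simp_all only: if_True if_False add_0)
qed

lemma sign_choices_eq_iff:
  "(\<forall>eps \<in> {1, -1::real}. \<forall>s \<in> {1, -1::real}.
      ((if a then eps else - eps) = s) = ((if b then eps else - eps) = s) \<and>
      ((if b then eps else - eps) = s) = ((if c then eps else - eps) = s) \<and>
      ((if c then eps else - eps) = s) = ((if d then eps else - eps) = s))
   \<longleftrightarrow> a = b \<and> b = c \<and> c = d"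
  by (cases a; cases b; cases c; cases d) simp_all

lemma S_regions_preserved_iff:
  assumes bq: "branched_quad False (quad_orientation False p0 p1 p2 p3 x)"
    "branched_quad True (quad_orientation True p0 p1 p2 p3 y)"
  defines "a \<equiv> p0 = (p1 = x)" and "b \<equiv> x = (p2 = (\<not> p3))"
    and "c \<equiv> p0 = (y = (\<not> p3))" and "d \<equiv> p1 = (p2 = y)"
  shows "(\<forall>eps \<in> {1, -1}. \<forall>s \<in> {1, -1}. S_region s eps False (quad_orientation False p0 p1 p2 p3 x) =
      S_region s eps True (quad_orientation True p0 p1 p2 p3 y)) \<longleftrightarrow> a = b \<and> b = c \<and> c = d"
proof -
  have "S_region s eps False (quad_orientation False p0 p1 p2 p3 x) =
      S_region s eps True (quad_orientation True p0 p1 p2 p3 y) \<longleftrightarrow>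
      ((if a then eps else - eps) = s) = ((if b then eps else - eps) = s) \<and>
      ((if b then eps else - eps) = s) = ((if c then eps else - eps) = s) \<and>
      ((if c then eps else - eps) = s) = ((if d then eps else - eps) = s)"
    if "eps \<in> {1, -1}" for eps s
    unfolding S_region_flip_eq_iff sgn_tri_diag02[OF that bq(1)] sgn_tri_diag13[OF that bq(2)]
      a_def b_def c_def d_def ..
  then have "(\<forall>eps \<in> {1, -1}. \<forall>s \<in> {1, -1}. S_region s eps False (quad_orientation False p0 p1 p2 p3 x) =
      S_region s eps True (quad_orientation True p0 p1 p2 p3 y)) \<longleftrightarrow>
      (\<forall>eps \<in> {1, -1::real}. \<forall>s \<in> {1, -1::real}.
        ((if a then eps else - eps) = s) = ((if b then eps else - eps) = s) \<and>
        ((if b then eps else - eps) = s) = ((if c then eps else - eps) = s) \<and>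
        ((if c then eps else - eps) = s) = ((if d then eps else - eps) = s))"
    by blast
  also have "\<dots> \<longleftrightarrow> a = b \<and> b = c \<and> c = d"
    by (rule sign_choices_eq_iff)
  finally show ?thesis .
qed

lemma b_flip_inverse: "b_flip d D D' \<Longrightarrow> b_flip (\<not> d) D' D"
  unfolding b_flip_def by auto

lemma non_ambiguous_inverse: "non_ambiguous (\<not> d) D' D \<longleftrightarrow> non_ambiguous d D D'"
  unfolding non_ambiguous_def by auto

lemma sliding_inverse: "sliding (\<not> d) D' D \<longleftrightarrow> sliding d D D'"
  unfolding sliding_def by auto

lemma branched_quad_obtain:
  assumes "branched_quad d D"
  obtains p0 p1 p2 p3 x where "D = quad_orientation d p0 p1 p2 p3 x"
  using assms unfolding branched_quad_def orients_quad_iff by blast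

lemma b_flip_quad_orientation_iff:
  "b_flip d (quad_orientation d p0 p1 p2 p3 x) D' \<longleftrightarrow>
     branched_quad d (quad_orientation d p0 p1 p2 p3 x) \<and>
     (\<exists>y. D' = quad_orientation (\<not> d) p0 p1 p2 p3 y \<and> branched_quad (\<not> d) D')"
proof
  assume flip: "b_flip d (quad_orientation d p0 p1 p2 p3 x) D'"
  then have bq: "branched_quad d (quad_orientation d p0 p1 p2 p3 x)" "branched_quad (\<not> d) D'"
    unfolding b_flip_def by simp_all
  from bq(2) obtain q0 q1 q2 q3 y where D': "D' = quad_orientation (\<not> d) q0 q1 q2 q3 y"
    by (rule branched_quad_obtain)
  from flip have "p0 = q0 \<and> p1 = q1 \<and> p2 = q2 \<and> p3 = q3"
    unfolding b_flip_def D' quad_orientation_inter_bdry bdry_orientation_eq_iff by simp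
  with bq D' show "branched_quad d (quad_orientation d p0 p1 p2 p3 x) \<and>
     (\<exists>y. D' = quad_orientation (\<not> d) p0 p1 p2 p3 y \<and> branched_quad (\<not> d) D')" by blast
next
  assume "branched_quad d (quad_orientation d p0 p1 p2 p3 x) \<and>
     (\<exists>y. D' = quad_orientation (\<not> d) p0 p1 p2 p3 y \<and> branched_quad (\<not> d) D')"
  then obtain y where "branched_quad d (quad_orientation d p0 p1 p2 p3 x)"
    "D' = quad_orientation (\<not> d) p0 p1 p2 p3 y" "branched_quad (\<not> d) D'"
    by blast
  then show "b_flip d (quad_orientation d p0 p1 p2 p3 x) D'"
    unfolding b_flip_def by (simp only: quad_orientation_inter_bdry simp_thms)
qed

lemma b_flip_obtain:
  assumes "b_flip d D D'"
  obtains p0 p1 p2 p3 x y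
  where "D = quad_orientation d p0 p1 p2 p3 x" "D' = quad_orientation (\<not> d) p0 p1 p2 p3 y"
proof -
  from assms have "branched_quad d D" unfolding b_flip_def by simp
  then obtain p0 p1 p2 p3 x where D: "D = quad_orientation d p0 p1 p2 p3 x"
    by (rule branched_quad_obtain)
  from assms have "b_flip d (quad_orientation d p0 p1 p2 p3 x) D'" unfolding D .
  then obtain y where "D' = quad_orientation (\<not> d) p0 p1 p2 p3 y"
    unfolding b_flip_quad_orientation_iff by blast
  with D show thesis by (rule that)
qed

lemma forced_quad_orientation_iff:
  assumes flip: "b_flip d (quad_orientation d p0 p1 p2 p3 x) (quad_orientation (\<not> d) p0 p1 p2 p3 y)"
  shows "forced d (quad_orientation d p0 p1 p2 p3 x) (quad_orientation (\<not> d) p0 p1 p2 p3 y) \<longleftrightarrow>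
    \<not> branched_quad (\<not> d) (quad_orientation (\<not> d) p0 p1 p2 p3 (\<not> y))"
proof -
  have "branched_quad (\<not> d) (quad_orientation (\<not> d) p0 p1 p2 p3 y)"
    using flip unfolding b_flip_def by simp
  then have "(\<forall>z. branched_quad (\<not> d) (quad_orientation (\<not> d) p0 p1 p2 p3 z) \<longrightarrow> z = y) \<longleftrightarrow>
      \<not> branched_quad (\<not> d) (quad_orientation (\<not> d) p0 p1 p2 p3 (\<not> y))"
    by (cases y) (simp_all add: all_bool_eq)
  moreover have "forced d (quad_orientation d p0 p1 p2 p3 x) (quad_orientation (\<not> d) p0 p1 p2 p3 y) \<longleftrightarrow>
      (\<forall>z. branched_quad (\<not> d) (quad_orientation (\<not> d) p0 p1 p2 p3 z) \<longrightarrow> z = y)"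
    using flip unfolding forced_def b_flip_quad_orientation_iff by (auto simp: quad_orientation_eq_iff)
  ultimately show ?thesis by (simp only:)
qed

lemma flip_from_diagonal_02:
  assumes flip: "b_flip False D D'"
  shows "(non_ambiguous False D D' \<longleftrightarrow>
            sliding False D D' \<and>
            (\<forall>eps \<in> {1, -1}. \<forall>s \<in> {1, -1}. S_region s eps False D = S_region s eps True D'))
       \<and> (non_ambiguous False D D' \<longrightarrow>
            (\<forall>eps \<in> {1, -1}. \<forall>s \<in> {1, -1}. S_bdry s eps False D = S_bdry s eps True D'))"
proof -
  obtain p0 p1 p2 p3 x y where D: "D = quad_orientation False p0 p1 p2 p3 x"
    and "D' = quad_orientation (\<not> False) p0 p1 p2 p3 y"
    using b_flip_obtain[OF flip] .
  then have D': "D' = quad_orientation True p0 p1 p2 p3 y" by simp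
  have flip': "b_flip False (quad_orientation False p0 p1 p2 p3 x) (quad_orientation True p0 p1 p2 p3 y)"
    using flip unfolding D D' .
  then have bq: "branched_quad False (quad_orientation False p0 p1 p2 p3 x)"
    "branched_quad True (quad_orientation True p0 p1 p2 p3 y)"
    unfolding b_flip_def by simp_all
  let ?old = "\<lambda>x. (p0 = p1 \<longrightarrow> x = p0) \<and> (x = p2 \<longrightarrow> (\<not> p3) = x)"
  let ?new = "\<lambda>y. (p0 = y \<longrightarrow> (\<not> p3) = p0) \<and> (p1 = p2 \<longrightarrow> y = p1)"
  let ?a = "p0 = (p1 = x)" and ?b = "x = (p2 = (\<not> p3))"
    and ?c = "p0 = (y = (\<not> p3))" and ?d = "p1 = (p2 = y)"
  have forced: "forced False D D' \<longleftrightarrow> \<not> ?new (\<not> y)" "forced True D' D \<longleftrightarrow> \<not> ?old (\<not> x)"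
    using forced_quad_orientation_iff[of False p0 p1 p2 p3 x y]
      forced_quad_orientation_iff[of True p0 p1 p2 p3 y x] flip b_flip_inverse[OF flip]
    unfolding D D' by (simp_all add: branched_quad_quad_orientation)
  have regions: "(\<forall>eps \<in> {1, -1}. \<forall>s \<in> {1, -1}.
      S_region s eps False D = S_region s eps True D') \<longleftrightarrow> ?a = ?b \<and> ?b = ?c \<and> ?c = ?d"
    unfolding D D' using bq by (rule S_regions_preserved_iff)
  have "forced False D D' \<and> forced True D' D \<longleftrightarrow>
      (forced False D D' \<or> forced True D' D) \<and> ?a = ?b \<and> ?b = ?c \<and> ?c = ?d"
    using bq unfolding forced branched_quad_quad_orientation
    by (cases p0; cases p1; cases p2; cases p3; cases x; cases y) simp_all
  then have "non_ambiguous False D D' \<longleftrightarrow> sliding False D D' \<and>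
      (\<forall>eps \<in> {1, -1}. \<forall>s \<in> {1, -1}. S_region s eps False D = S_region s eps True D')"
    unfolding non_ambiguous_def sliding_def regions by simp
  then show ?thesis using S_bdry_flip_eq by blast
qed

theorem proposition2p2:
  assumes "b_flip d D D'"
  shows "(non_ambiguous d D D' \<longleftrightarrow>
            sliding d D D' \<and>
            (\<forall>eps \<in> {1, -1}. \<forall>s \<in> {1, -1}. S_region s eps d D = S_region s eps (\<not> d) D'))
       \<and> (non_ambiguous d D D' \<longrightarrow>
            (\<forall>eps \<in> {1, -1}. \<forall>s \<in> {1, -1}. S_bdry s eps d D = S_bdry s eps (\<not> d) D'))"
proof (cases d)
  case False
  with assms flip_from_diagonal_02 show ?thesis by simp
next
  case True
  with b_flip_inverse[OF assms] have "b_flip False D' D" by simp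
  moreover have "non_ambiguous True D D' \<longleftrightarrow> non_ambiguous False D' D"
    "sliding True D D' \<longleftrightarrow> sliding False D' D"
    using non_ambiguous_inverse[of True D' D] sliding_inverse[of True D' D] by simp_all
  moreover have "S_region s eps True D = S_region s eps False D' \<longleftrightarrow>
      S_region s eps False D' = S_region s eps True D"
    "S_bdry s eps True D = S_bdry s eps False D' \<longleftrightarrow> S_bdry s eps False D' = S_bdry s eps True D"
    for s eps by (rule eq_commute)+
  ultimately show ?thesis using flip_from_diagonal_02 True by simp
qed

end
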